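(* Let $\mathfrak L$ be a GNN layer of input dimension $p$. Then there is a $\gamma\in\mathbb N_{>0}$ such that for all graphs $G$, all signals $\mathcal x:V(G)\to\mathbb R^p$, and all vertices $v\in V(G)$, $$\|\tilde{\mathfrak L}(G,\mathcal x)(v)\|_\infty\le\gamma\cdot\big(\|\mathcal x|_{N[v]}\|_\infty+1\big)\max\{\deg(v),1\}\le\gamma\cdot(\|\mathcal x\|_\infty+1)|G|.$$
   Context: Graphs are finite, simple, undirected with nonempty vertex set; $N(v)$ is the neighbourhood, $N[v]=N(v)\cup\{v\}$, $\deg(v)=|N(v)|$, $|G|=|V(G)|$. For a signal $\mathcal x$ and $W\subseteq V(G)$, $\|\mathcal x|_W\|_\infty=\max_{w\in W}\|\mathcal x(w)\|_\infty$ and $\|\mathcal x\|_\infty=\|\mathcal x|_{V(G)}\|_\infty$. An FNN has a finite dag skeleton, Lipschitz continuous activation functions $\mathfrak a_v$, real weights $w_e$ and biases $b_v$; sources are inputs, sinks outputs, a non-input node computes $\mathfrak a_v(b_v+\sum_{uv\in E}w_{uv}\cdot\text{value}(u))$. A GNN layer $\mathfrak L=(\mathrm{msg},\mathrm{agg},\mathrm{comb})$ of input dimension $p$ has $\mathrm{msg}:\mathbb R^{2p}\to\mathbb R^r$ and $\mathrm{comb}:\mathbb R^{p+r}\to\mathbb R^q$ computed by FNNs and $\mathrm{agg}$ coordinatewise sum, mean or maximum of finite multisets (value $\mathbf 0$ on the empty multiset); $\tilde{\mathfrak L}(G,\mathcal x)(v)=\mathrm{comb}\big(\mathcal x(v),\mathrm{agg}\{\!\{\mathrm{msg}(\mathcal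 x(v),\mathcal x(w)):w\in N(v)\}\!\}\big)$. *)

theory Defs
  imports "HOL-Analysis.Analysis" "HOL-Library.Multiset"
begin

text \<open>An FNN skeleton is a finite dag; its nodes are numbered 0..<fnn_n in a
topological order (every edge (u,w) has u < w). The inputs (sources) and outputs
(sinks) are listed in a fixed order, which fixes how the FNN computes a map
R^m -> R^k (vectors are real lists).\<close>

record fnn =
  fnn_n    :: nat
  fnn_edges :: "(nat \<times> nat) set"
  fnn_w    :: "nat \<Rightarrow> nat \<Rightarrow> real"
  fnn_b    :: "nat \<Rightarrow> real"
  fnn_act  :: "nat \<Rightarrow> real \<Rightarrow> real"
  fnn_inp  :: "nat list"
  fnn_outp :: "nat list"

definition fnn_wf :: "fnn \<Rightarrow> bool" where
  "fnn_wf N \<longleftrightarrow>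
     fnn_edges N \<subseteq> {(u, w). u < w \<and> w < fnn_n N} \<and>
     distinct (fnn_inp N) \<and>
     set (fnn_inp N) = {w. w < fnn_n N \<and> (\<forall>u. (u, w) \<notin> fnn_edges N)} \<and>
     distinct (fnn_outp N) \<and>
     set (fnn_outp N) = {u. u < fnn_n N \<and> (\<forall>w. (u, w) \<notin> fnn_edges N)} \<and>
     (\<forall>w < fnn_n N. w \<notin> set (fnn_inp N) \<longrightarrow> (\<exists>C. C-lipschitz_on UNIV (fnn_act N w)))"

function fnn_node :: "fnn \<Rightarrow> real list \<Rightarrow> nat \<Rightarrow> real" where
  "fnn_node N xs w =
     (if w \<in> set (fnn_inp N) then xs ! (THE i. i < length (fnn_inp N) \<and> fnn_inp N ! i = w)
      else fnn_act N w (fnn_b N w +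
         (\<Sum>u\<in>{u. u < w \<and> (u, w) \<in> fnn_edges N}. fnn_w N u w * fnn_node N xs u)))"
  by pat_completeness auto
termination by (relation "Wellfounded.measure (\<lambda>(N, xs, w). w)") auto

declare fnn_node.simps[simp del]

definition fnn_fun :: "fnn \<Rightarrow> real list \<Rightarrow> real list" where
  "fnn_fun N xs = map (fnn_node N xs) (fnn_outp N)"

datatype aggr = AggSum | AggMean | AggMax

definition aggregate :: "aggr \<Rightarrow> nat \<Rightarrow> real list multiset \<Rightarrow> real list" where
  "aggregate a r M =
     (if M = {#} then replicate r 0
      else map (\<lambda>i. let Mi = image_mset (\<lambda>y. y ! i) M in
                  (case a of AggSum \<Rightarrow> sum_mset Mi
                           | AggMean \<Rightarrow> sum_mset Mi / real (size Mi)
                           | AggMax \<Rightarrow> Max (set_mset Mi))) [0..<r])"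

record gnn_layer =
  gl_p    :: nat
  gl_msg  :: fnn
  gl_agg  :: aggr
  gl_comb :: fnn

definition gl_r :: "gnn_layer \<Rightarrow> nat" where
  "gl_r L = length (fnn_outp (gl_msg L))"

definition gnn_layer_wf :: "gnn_layer \<Rightarrow> bool" where
  "gnn_layer_wf L \<longleftrightarrow>
     fnn_wf (gl_msg L) \<and> length (fnn_inp (gl_msg L)) = 2 * gl_p L \<and>
     fnn_wf (gl_comb L) \<and> length (fnn_inp (gl_comb L)) = gl_p L + gl_r L"

text \<open>Finite simple undirected graphs with nonempty vertex set; vertices are naturals
(every finite graph is isomorphic to such a graph).\<close>
definition graph :: "nat set \<Rightarrow> (nat \<times> nat) set \<Rightarrow> bool" where
  "graph V E \<longleftrightarrow> finite V \<and> V \<noteq> {} \<and> E \<subseteq> V \<times> V \<and> sym E \<and> (\<forall>v. (v, v) \<notin> E)"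

definition nbhd :: "nat set \<Rightarrow> (nat \<times> nat) set \<Rightarrow> nat \<Rightarrow> nat set" where
  "nbhd V E v = {w \<in> V. (v, w) \<in> E}"

definition cnbhd :: "nat set \<Rightarrow> (nat \<times> nat) set \<Rightarrow> nat \<Rightarrow> nat set" where
  "cnbhd V E v = insert v (nbhd V E v)"

definition deg :: "nat set \<Rightarrow> (nat \<times> nat) set \<Rightarrow> nat \<Rightarrow> nat" where
  "deg V E v = card (nbhd V E v)"

text \<open>Infinity norm of a vector in R^p (0 for p = 0).\<close>
definition linf :: "real list \<Rightarrow> real" where
  "linf xs = Max (insert 0 (abs ` set xs))"

text \<open>Infinity norm of a signal restricted to W (W finite, nonempty).\<close>
definition sig_norm :: "(nat \<Rightarrow> real list) \<Rightarrow> nat set \<Rightarrow> real" where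
  "sig_norm x W = Max ((\<lambda>w. linf (x w)) ` W)"

definition layer_apply ::
  "gnn_layer \<Rightarrow> nat set \<Rightarrow> (nat \<times> nat) set \<Rightarrow> (nat \<Rightarrow> real list) \<Rightarrow> nat \<Rightarrow> real list" where
  "layer_apply L V E x v =
     fnn_fun (gl_comb L)
       (x v @ aggregate (gl_agg L) (gl_r L)
                (image_mset (\<lambda>w. fnn_fun (gl_msg L) (x v @ x w)) (mset_set (nbhd V E v))))"

end

theory Submission
  imports Defs
begin

text \<open>An FNN skeleton is a dag and its activations are Lipschitz, so induction along a
topological order bounds every node, hence every output, by an affine function of the sup norm
of the input. Thus every message sent to \<open>v\<close> is bounded by a constant times
\<open>sig_norm x (cnbhd V E v) + 1\<close>; sum, mean and maximum of \<open>deg v\<close> such messages are at most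
\<open>max (deg v) 1\<close> times that bound, and the combination FNN contributes one more affine factor.
The second inequality holds because \<open>N[v] \<subseteq> V\<close> and \<open>deg v < |V|\<close>.\<close>

lemma linf_nonneg: "0 \<le> linf xs"
  unfolding linf_def by (simp add: Max_ge_iff)

lemma abs_linf [simp]: "\<bar>linf xs\<bar> = linf xs"
  by (simp add: linf_nonneg)

lemma abs_le_linf: "y \<in> set xs \<Longrightarrow> \<bar>y\<bar> \<le> linf xs"
  unfolding linf_def by (simp add: Max_ge_iff)

lemma linf_le_iff: "linf xs \<le> B \<longleftrightarrow> 0 \<le> B \<and> (\<forall>y\<in>set xs. \<bar>y\<bar> \<le> B)"
  unfolding linf_def by (simp add: Max_le_iff)

lemma linf_append: "linf (xs @ ys) = max (linf xs) (linf ys)"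
  by (rule antisym) (auto simp: linf_le_iff linf_nonneg abs_le_linf intro: le_max_iff_disj[THEN iffD2])

definition linear_growth :: "nat \<Rightarrow> (real list \<Rightarrow> real) \<Rightarrow> bool" where
  "linear_growth m f \<longleftrightarrow> (\<exists>K\<ge>0. \<forall>xs. length xs = m \<longrightarrow> \<bar>f xs\<bar> \<le> K * (linf xs + 1))"

lemma linear_growthI:
  "0 \<le> K \<Longrightarrow> (\<And>xs. length xs = m \<Longrightarrow> \<bar>f xs\<bar> \<le> K * (linf xs + 1)) \<Longrightarrow> linear_growth m f"
  unfolding linear_growth_def by blast

lemma linear_growth_const: "linear_growth m (\<lambda>_. c)"
  by (rule linear_growthI[of "\<bar>c\<bar>"]) (auto intro: mult_le_cancel_left1[THEN iffD2] simp: linf_nonneg)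

lemma linear_growth_nth: "i < m \<Longrightarrow> linear_growth m (\<lambda>xs. xs ! i)"
  by (rule linear_growthI[of 1]) (use abs_le_linf[OF nth_mem] in fastforce)+

lemma linear_growth_add:
  assumes "linear_growth m f" "linear_growth m g"
  shows "linear_growth m (\<lambda>xs. f xs + g xs)"
proof -
  obtain K1 K2 where "0 \<le> K1" "0 \<le> K2"
    and "\<And>xs. length xs = m \<Longrightarrow> \<bar>f xs\<bar> \<le> K1 * (linf xs + 1)"
    and "\<And>xs. length xs = m \<Longrightarrow> \<bar>g xs\<bar> \<le> K2 * (linf xs + 1)"
    using assms unfolding linear_growth_def by blast
  then show ?thesis
    by (intro linear_growthI[of "K1 + K2"]) (auto simp: distrib_right intro: order_trans[OF abs_triangle_ineq add_mono])
qed

lemma linear_growth_cmult: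
  assumes "linear_growth m f"
  shows "linear_growth m (\<lambda>xs. c * f xs)"
proof -
  obtain K where "0 \<le> K" and "\<And>xs. length xs = m \<Longrightarrow> \<bar>f xs\<bar> \<le> K * (linf xs + 1)"
    using assms unfolding linear_growth_def by blast
  then show ?thesis
    by (intro linear_growthI[of "\<bar>c\<bar> * K"]) (auto simp: abs_mult mult.assoc intro: mult_left_mono)
qed

lemma linear_growth_sum:
  assumes "finite S" "\<And>u. u \<in> S \<Longrightarrow> linear_growth m (f u)"
  shows "linear_growth m (\<lambda>xs. \<Sum>u\<in>S. f u xs)"
  using assms by (induction S rule: finite_induct) (auto intro: linear_growth_add linear_growth_const)

lemma linear_growth_abs: "linear_growth m f \<Longrightarrow> linear_growth m (\<lambda>xs. \<bar>f xs\<bar>)"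
  by (simp add: linear_growth_def)

lemma linear_growth_mono:
  assumes "linear_growth m g" "\<And>xs. length xs = m \<Longrightarrow> \<bar>f xs\<bar> \<le> \<bar>g xs\<bar>"
  shows "linear_growth m f"
  using assms unfolding linear_growth_def by (meson order_trans)

lemma abs_le_lipschitz:
  assumes "C-lipschitz_on UNIV g"
  shows "\<bar>g t\<bar> \<le> \<bar>g 0\<bar> + C * \<bar>t\<bar>"
  using lipschitz_onD[OF assms, of t 0] by (simp add: dist_real_def)

lemma linear_growth_lipschitz:
  assumes g: "C-lipschitz_on UNIV g" and f: "linear_growth m f"
  shows "linear_growth m (\<lambda>xs. g (f xs))"
proof -
  obtain K where K: "0 \<le> K" "\<And>xs. length xs = m \<Longrightarrow> \<bar>f xs\<bar> \<le> K * (linf xs + 1)"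
    using f unfolding linear_growth_def by blast
  have C: "0 \<le> C" using g by (rule lipschitz_on_nonneg)
  show ?thesis
  proof (rule linear_growthI[of "\<bar>g 0\<bar> + C * K"])
    fix xs :: "real list" assume "length xs = m"
    then have "C * \<bar>f xs\<bar> \<le> C * K * (linf xs + 1)" using K C by (simp add: mult.assoc mult_left_mono)
    moreover have "\<bar>g 0\<bar> \<le> \<bar>g 0\<bar> * (linf xs + 1)" by (simp add: mult_le_cancel_left1 linf_nonneg)
    ultimately show "\<bar>g (f xs)\<bar> \<le> (\<bar>g 0\<bar> + C * K) * (linf xs + 1)"
      using abs_le_lipschitz[OF g, of "f xs"] by (simp add: distrib_right)
  qed (use C K in simp)
qed

lemma linear_growth_linf_map:
  assumes "\<And>w. w \<in> set ws \<Longrightarrow> linear_growth m (F w)"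
  shows "linear_growth m (\<lambda>xs. linf (map (\<lambda>w. F w xs) ws))"
proof (rule linear_growth_mono)
  show "linear_growth m (\<lambda>xs. \<Sum>w\<in>set ws. \<bar>F w xs\<bar>)"
    using assms by (intro linear_growth_sum linear_growth_abs) auto
  fix xs :: "real list"
  have "linf (map (\<lambda>w. F w xs) ws) \<le> (\<Sum>w\<in>set ws. \<bar>F w xs\<bar>)"
    by (auto simp: linf_le_iff intro: sum_nonneg member_le_sum)
  then show "\<bar>linf (map (\<lambda>w. F w xs) ws)\<bar> \<le> \<bar>\<Sum>w\<in>set ws. \<bar>F w xs\<bar>\<bar>"
    by simp
qed

lemma fnn_node_linear_growth:
  assumes wf: "fnn_wf N" and "w < fnn_n N"
  shows "linear_growth (length (fnn_inp N)) (\<lambda>xs. fnn_node N xs w)"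
  using \<open>w < fnn_n N\<close>
proof (induction w rule: less_induct)
  case (less w)
  show ?case
  proof (cases "w \<in> set (fnn_inp N)")
    case True
    define i where "i = (THE i. i < length (fnn_inp N) \<and> fnn_inp N ! i = w)"
    obtain j where j: "j < length (fnn_inp N)" "fnn_inp N ! j = w"
      using True by (auto simp: in_set_conv_nth)
    have "distinct (fnn_inp N)" using wf by (simp add: fnn_wf_def)
    then have "i = j"
      unfolding i_def using j by (intro the_equality) (auto simp: nth_eq_iff_index_eq)
    with j have "i < length (fnn_inp N)" by simp
    moreover have "fnn_node N xs w = xs ! i" for xs
      using True by (simp add: fnn_node.simps[of N xs w] i_def)
    ultimately show ?thesis by (simp add: linear_growth_nth)
  next
    case False
    define S where "S = {u. u < w \<and> (u, w) \<in> fnn_edges N}"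
    obtain C where C: "C-lipschitz_on UNIV (fnn_act N w)"
      using wf False less.prems by (auto simp: fnn_wf_def)
    have "linear_growth (length (fnn_inp N)) (\<lambda>xs. fnn_node N xs u)" if "u \<in> S" for u
      using that less by (simp add: S_def)
    then have "linear_growth (length (fnn_inp N))
        (\<lambda>xs. fnn_b N w + (\<Sum>u\<in>S. fnn_w N u w * fnn_node N xs u))"
      by (intro linear_growth_add linear_growth_const linear_growth_sum linear_growth_cmult)
        (auto simp: S_def)
    then show ?thesis
      using linear_growth_lipschitz[OF C] False by (simp add: fnn_node.simps[of N _ w] S_def)
  qed
qed

lemma length_fnn_fun [simp]: "length (fnn_fun N xs) = length (fnn_outp N)"
  by (simp add: fnn_fun_def)

lemma fnn_fun_linear_growth:
  assumes "fnn_wf N"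
  shows "linear_growth (length (fnn_inp N)) (\<lambda>xs. linf (fnn_fun N xs))"
  unfolding fnn_fun_def using assms
  by (intro linear_growth_linf_map fnn_node_linear_growth) (auto simp: fnn_wf_def)

lemma abs_sum_mset_le:
  fixes M :: "real multiset"
  assumes "\<And>y. y \<in># M \<Longrightarrow> \<bar>y\<bar> \<le> B"
  shows "\<bar>sum_mset M\<bar> \<le> real (size M) * B"
  using assms
proof (induction M)
  case (add y M)
  then have "\<bar>y + sum_mset M\<bar> \<le> B + real (size M) * B"
    by (intro order_trans[OF abs_triangle_ineq add_mono]) auto
  then show ?case by (simp add: algebra_simps)
qed simp

lemma length_aggregate [simp]: "length (aggregate a r M) = r"
  by (simp add: aggregate_def)

lemma linf_aggregate_le:
  assumes B: "0 \<le> B" and M: "\<And>y. y \<in># M \<Longrightarrow> length y = r \<and> linf y \<le> B"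
  shows "linf (aggregate a r M) \<le> real (max (size M) 1) * B"
proof (cases "M = {#}")
  case True
  then show ?thesis using B by (simp add: aggregate_def linf_le_iff)
next
  case False
  have n: "real (max (size M) 1) = real (size M)" "0 < real (size M)"
    using False by (simp_all add: nonempty_has_size)
  have B_le: "B \<le> real (size M) * B"
    using n B by (simp add: mult_le_cancel_right1)
  have coord: "\<bar>c\<bar> \<le> B" if "i < r" "c \<in># image_mset (\<lambda>y. y ! i) M" for i c
    using that M abs_le_linf[OF nth_mem] by fastforce
  have "\<bar>c\<bar> \<le> real (size M) * B" if "c \<in> set (aggregate a r M)" for c
  proof -
    from that False obtain i where i: "i < r" and c: "c = (let Mi = image_mset (\<lambda>y. y ! i) M in
        case a of AggSum \<Rightarrow> sum_mset Mi | AggMean \<Rightarrow> sum_mset Mi / real (size Mi)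
                | AggMax \<Rightarrow> Max (set_mset Mi))"
      by (auto simp: aggregate_def)
    define Mi where "Mi = image_mset (\<lambda>y. y ! i) M"
    have sum_le: "\<bar>sum_mset Mi\<bar> \<le> real (size M) * B"
      using abs_sum_mset_le[of Mi B] coord[OF i] by (simp add: Mi_def)
    show ?thesis
    proof (cases a)
      case AggSum
      then show ?thesis using c sum_le by (simp add: Mi_def)
    next
      case AggMean
      have "\<bar>sum_mset Mi / real (size M)\<bar> \<le> B"
        using sum_le n(2) by (simp add: abs_divide divide_le_eq mult.commute)
      then show ?thesis using c AggMean B_le by (simp add: Mi_def)
    next
      case AggMax
      have "Max (set_mset Mi) \<in># Mi" using False by (simp add: Mi_def)
      then have "\<bar>Max (set_mset Mi)\<bar> \<le> B" using coord[OF i] by (simp add: Mi_def)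
      then show ?thesis using c AggMax B_le by (simp add: Mi_def)
    qed
  qed
  then show ?thesis using n B by (simp add: linf_le_iff)
qed

lemma cnbhd_subset: "v \<in> V \<Longrightarrow> cnbhd V E v \<subseteq> V"
  by (auto simp: cnbhd_def nbhd_def)

lemma finite_cnbhd: "finite V \<Longrightarrow> v \<in> V \<Longrightarrow> finite (cnbhd V E v)"
  using cnbhd_subset finite_subset by metis

lemma linf_le_sig_norm: "finite W \<Longrightarrow> w \<in> W \<Longrightarrow> linf (x w) \<le> sig_norm x W"
  unfolding sig_norm_def by (rule Max_ge) auto

lemma sig_norm_nonneg: "finite W \<Longrightarrow> W \<noteq> {} \<Longrightarrow> 0 \<le> sig_norm x W"
  using linf_le_sig_norm linf_nonneg by (metis all_not_in_conv order_trans)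

lemma sig_norm_mono: "finite V \<Longrightarrow> W \<subseteq> V \<Longrightarrow> W \<noteq> {} \<Longrightarrow> sig_norm x W \<le> sig_norm x V"
  unfolding sig_norm_def by (intro Max_mono) auto

lemma max_deg_le_card:
  assumes "graph V E" "v \<in> V"
  shows "max (deg V E v) 1 \<le> card V"
proof -
  have "nbhd V E v \<subseteq> V - {v}" and "finite V"
    using assms by (auto simp: graph_def nbhd_def)
  then have "deg V E v \<le> card V - 1"
    unfolding deg_def using assms(2) by (metis card_Diff_singleton card_mono finite_Diff)
  moreover have "0 < card V" using \<open>finite V\<close> assms(2) card_gt_0_iff by blast
  ultimately show ?thesis by simp
qed

lemma sig_norm_cnbhd_nonneg: "finite V \<Longrightarrow> v \<in> V \<Longrightarrow> 0 \<le> sig_norm x (cnbhd V E v)"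
  by (intro sig_norm_nonneg finite_cnbhd) (auto simp: cnbhd_def)

lemma cnbhd_bound_le_graph_bound:
  assumes G: "graph V E" and v: "v \<in> V" and c: "0 \<le> c"
  shows "c * (sig_norm x (cnbhd V E v) + 1) * real (max (deg V E v) 1)
    \<le> c * (sig_norm x V + 1) * real (card V)"
proof -
  have V: "finite V" using G by (simp add: graph_def)
  have "sig_norm x (cnbhd V E v) \<le> sig_norm x V"
    using V cnbhd_subset[OF v] by (rule sig_norm_mono) (simp add: cnbhd_def)
  then show ?thesis
    using c sig_norm_cnbhd_nonneg[OF V v, of x E] max_deg_le_card[OF G v]
    by (intro mult_mono mult_left_mono) auto
qed

lemma linf_message_le:
  assumes msg: "\<And>xs. length xs = 2 * gl_p L \<Longrightarrow> linf (fnn_fun (gl_msg L) xs) \<le> Km * (linf xs + 1)"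
    and Km: "0 \<le> Km" and V: "finite V" "v \<in> V" and x: "\<And>u. u \<in> V \<Longrightarrow> length (x u) = gl_p L"
    and w: "w \<in> nbhd V E v"
  shows "linf (fnn_fun (gl_msg L) (x v @ x w)) \<le> Km * (sig_norm x (cnbhd V E v) + 1)"
proof -
  have "v \<in> cnbhd V E v" "w \<in> cnbhd V E v" "w \<in> V" using w by (auto simp: cnbhd_def nbhd_def)
  then have "linf (x v @ x w) \<le> sig_norm x (cnbhd V E v)" "length (x v @ x w) = 2 * gl_p L"
    using finite_cnbhd[OF V] x V by (simp_all add: linf_append linf_le_sig_norm)
  then show ?thesis
    using msg Km by (meson add_right_mono mult_left_mono order_trans)
qed

lemma linf_layer_apply_le:
  assumes msg: "\<And>xs. length xs = 2 * gl_p L \<Longrightarrow> linf (fnn_fun (gl_msg L) xs) \<le> Km * (linf xs + 1)"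
    and comb: "\<And>xs. length xs = gl_p L + gl_r L \<Longrightarrow> linf (fnn_fun (gl_comb L) xs) \<le> Kc * (linf xs + 1)"
    and Km: "0 \<le> Km" and Kc: "0 \<le> Kc"
    and V: "finite V" "v \<in> V" and x: "\<And>u. u \<in> V \<Longrightarrow> length (x u) = gl_p L"
  shows "linf (layer_apply L V E x v)
    \<le> Kc * (Km + 1) * (sig_norm x (cnbhd V E v) + 1) * real (max (deg V E v) 1)"
proof -
  define s where "s = sig_norm x (cnbhd V E v)"
  define D where "D = real (max (deg V E v) 1)"
  define msgs where "msgs = image_mset (\<lambda>w. fnn_fun (gl_msg L) (x v @ x w)) (mset_set (nbhd V E v))"
  have fin: "finite (cnbhd V E v)" using V by (rule finite_cnbhd)
  then have fin_nbhd: "finite (nbhd V E v)" by (simp add: cnbhd_def)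
  have s: "0 \<le> s" unfolding s_def using V by (rule sig_norm_cnbhd_nonneg)
  have D: "1 \<le> D" by (simp add: D_def)
  have msgs: "length y = gl_r L \<and> linf y \<le> Km * (s + 1)" if "y \<in># msgs" for y
    using that fin_nbhd linf_message_le[OF msg Km V x] by (auto simp: msgs_def s_def gl_r_def)
  have "linf (aggregate (gl_agg L) (gl_r L) msgs) \<le> real (max (size msgs) 1) * (Km * (s + 1))"
    using Km s msgs by (intro linf_aggregate_le) auto
  then have agg: "linf (aggregate (gl_agg L) (gl_r L) msgs) \<le> D * (Km * (s + 1))"
    by (simp add: D_def deg_def msgs_def)
  have "s + 1 \<le> D * (s + 1)" using D s by (simp add: mult_le_cancel_right1)
  moreover have "(Km + 1) * (s + 1) * D = D * (s + 1) + D * (Km * (s + 1))"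
    by (simp add: algebra_simps)
  moreover have "0 \<le> D * (Km * (s + 1))" using D Km s by simp
  moreover have "linf (x v) \<le> s"
    unfolding s_def using fin by (rule linf_le_sig_norm) (simp add: cnbhd_def)
  ultimately have "linf (x v) + 1 \<le> (Km + 1) * (s + 1) * D"
    and "linf (aggregate (gl_agg L) (gl_r L) msgs) + 1 \<le> (Km + 1) * (s + 1) * D"
    using agg s by linarith+
  then have "linf (x v @ aggregate (gl_agg L) (gl_r L) msgs) + 1 \<le> (Km + 1) * (s + 1) * D"
    by (simp add: linf_append max_add_distrib_right)
  moreover have "length (x v @ aggregate (gl_agg L) (gl_r L) msgs) = gl_p L + gl_r L"
    using x V by simp
  ultimately have "linf (layer_apply L V E x v) \<le> Kc * ((Km + 1) * (s + 1) * D)"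
    unfolding layer_apply_def msgs_def[symmetric]
    using comb Kc by (meson mult_left_mono order_trans)
  then show ?thesis by (simp add: s_def D_def mult.assoc)
qed

theorem lemma4p2:
  fixes L :: gnn_layer
  assumes "gnn_layer_wf L"
  shows "\<exists>\<gamma>::nat. \<gamma> > 0 \<and>
    (\<forall>V E x v. graph V E \<longrightarrow> (\<forall>u\<in>V. length (x u) = gl_p L) \<longrightarrow> v \<in> V \<longrightarrow>
       linf (layer_apply L V E x v)
         \<le> real \<gamma> * (sig_norm x (cnbhd V E v) + 1) * real (max (deg V E v) 1) \<and>
       real \<gamma> * (sig_norm x (cnbhd V E v) + 1) * real (max (deg V E v) 1)
         \<le> real \<gamma> * (sig_norm x V + 1) * real (card V))"
proof -
  obtain Km where Km: "0 \<le> Km"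
    "\<And>xs. length xs = 2 * gl_p L \<Longrightarrow> linf (fnn_fun (gl_msg L) xs) \<le> Km * (linf xs + 1)"
    using assms fnn_fun_linear_growth[of "gl_msg L"] by (auto simp: gnn_layer_wf_def linear_growth_def)
  obtain Kc where Kc: "0 \<le> Kc"
    "\<And>xs. length xs = gl_p L + gl_r L \<Longrightarrow> linf (fnn_fun (gl_comb L) xs) \<le> Kc * (linf xs + 1)"
    using assms fnn_fun_linear_growth[of "gl_comb L"] by (auto simp: gnn_layer_wf_def linear_growth_def)
  define \<gamma> where "\<gamma> = nat \<lceil>Kc * (Km + 1)\<rceil> + 1"
  have \<gamma>: "Kc * (Km + 1) \<le> real \<gamma>"
    unfolding \<gamma>_def using real_nat_ceiling_ge[of "Kc * (Km + 1)"] by linarith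
  show ?thesis
  proof (intro exI[of _ \<gamma>] conjI allI impI)
    fix V :: "nat set" and E :: "(nat \<times> nat) set" and x :: "nat \<Rightarrow> real list" and v :: nat
    assume G: "graph V E" and x: "\<forall>u\<in>V. length (x u) = gl_p L" and v: "v \<in> V"
    have V: "finite V" using G by (simp add: graph_def)
    have "linf (layer_apply L V E x v)
        \<le> Kc * (Km + 1) * (sig_norm x (cnbhd V E v) + 1) * real (max (deg V E v) 1)"
      using Km Kc V v x by (intro linf_layer_apply_le) auto
    also have "\<dots> \<le> real \<gamma> * (sig_norm x (cnbhd V E v) + 1) * real (max (deg V E v) 1)"
      using \<gamma> sig_norm_cnbhd_nonneg[OF V v] by (intro mult_right_mono) auto
    finally show "linf (layer_apply L V E x v)
        \<le> real \<gamma> * (sig_norm x (cnbhd V E v) + 1) * real (max (deg V E v) 1)" .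
  qed (use cnbhd_bound_le_graph_bound in \<open>auto simp: \<gamma>_def\<close>)
qed

end
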